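(* Let $n\le -1$ be an odd integer with $3\mid n$. Then $$q_n-(1-w)\,q'_n\equiv -w\pmod 3,$$ where $q'_n=dq_n/dw$ and the congruence is coefficientwise in $\mathbb{Z}[w]$.
   Context: Define $q_n\in\mathbb{Z}[w]$ for odd $n\le -1$ by $q_{-1}=w^3-w^2+2w-7$, $q_{-3}=w^5-2w^4-2w^3+5w^2+3w-9$, $q_{-5}=w^7-2w^6-4w^5+8w^4+4w^3-7w^2+2w-7$, and $q_n=(w^2-1)(q_{n+2}-q_{n+4})+q_{n+6}$ for odd $n<-5$. *)

theory Defs
  imports "HOL-Computational_Algebra.Polynomial" "HOL-Number_Theory.Cong"
begin

text \<open>Q k is q_n for n = -(2k+1).\<close>
fun Q :: "nat \<Rightarrow> int poly" where
  "Q 0 = [:-7, 2, -1, 1:]"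
| "Q (Suc 0) = [:-9, 3, 5, -2, -2, 1:]"
| "Q (Suc (Suc 0)) = [:-7, 2, -7, 4, 8, -4, -2, 1:]"
| "Q (Suc (Suc (Suc k))) =
     [:-1, 0, 1:] * (Q (Suc (Suc k)) - Q (Suc k)) + Q k"

definition qpoly :: "int \<Rightarrow> int poly" where
  "qpoly n = Q (nat ((- n - 1) div 2))"

end

theory Submission
  imports Defs
begin

(* Write L p = p - (1 - w) p' and c = [:3:].  The claim is that c divides L (q_n) + w whenever
   3 divides n, i.e. (with q_n = Q k, k = (-n-1)/2) whenever k = 1 (mod 3).

   The polynomials Q k satisfy a third-order linear recurrence with coefficient a = w^2 - 1.
   Its characteristic polynomial x^3 - a x^2 + a x - 1 cubed is congruent mod 3 to
   x^9 - a^3 x^6 + a^3 x^3 - 1 (Frobenius), so, mod 3, Q (k+9) = a^3 (Q (k+6) - Q (k+3)) + Q k.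
   Since L is additive, satisfies a product rule, and pderiv (a^3) = 3 a^2 a' vanishes mod 3,
   the property "c divides L (Q k) + w" propagates from k, k+3, k+6 to k+9.  Checking it for
   Q 1, Q 4, Q 7 directly and inducting along the residue class 1 mod 3 gives the theorem. *)

text \<open>Tripling the step of the recurrence \<open>f (k+3) = a (f (k+2) - f (k+1)) + f k\<close>:
  up to a multiple of 3 the coefficients become the cubes of the original ones.\<close>
lemma recurrence_step9:
  fixes f :: "nat \<Rightarrow> 'a::comm_ring_1"
  assumes r: "\<And>k. f (k+3) = a * (f (k+2) - f (k+1)) + f k"
  shows "f (k+9) = a^3 * (f (k+6) - f (k+3)) + f k + 3 * (
     ((-2)*a^2 + a^3 + 2*a^4 - a^5) * f k
   + ((-1)*a + a^2 + 3*a^3 - 2*a^4 - 2*a^5 + a^6) * f (k+1)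
   + (a + a^2 - 4*a^3 + 3*a^5 - a^6) * f (k+2))"
proof -
  have e3: "f (k+3) = a * (f (k+2) - f (k+1)) + f k" using r[of k] by simp
  have e4: "f (k+4) = a * (f (k+3) - f (k+2)) + f (k+1)" using r[of "k+1"] by (simp add: eval_nat_numeral)
  have e5: "f (k+5) = a * (f (k+4) - f (k+3)) + f (k+2)" using r[of "k+2"] by (simp add: eval_nat_numeral)
  have e6: "f (k+6) = a * (f (k+5) - f (k+4)) + f (k+3)" using r[of "k+3"] by (simp add: eval_nat_numeral)
  have e7: "f (k+7) = a * (f (k+6) - f (k+5)) + f (k+4)" using r[of "k+4"] by (simp add: eval_nat_numeral)
  have e8: "f (k+8) = a * (f (k+7) - f (k+6)) + f (k+5)" using r[of "k+5"] by (simp add: eval_nat_numeral)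
  have e9: "f (k+9) = a * (f (k+8) - f (k+7)) + f (k+6)" using r[of "k+6"] by (simp add: eval_nat_numeral)
  show ?thesis unfolding e9 e8 e7 e6 e5 e4 e3 by (simp add: algebra_simps power_def)
qed

text \<open>Divisibility of a polynomial by a constant, peeled off coefficient by coefficient;
  with this, \<open>simp\<close> decides divisibility of explicitly given polynomials.\<close>
lemma const_poly_dvd_pCons:
  fixes c :: "'a::{comm_semiring_1,semiring_no_zero_divisors}"
  shows "[:c:] dvd pCons b p \<longleftrightarrow> c dvd b \<and> [:c:] dvd p"
  unfolding const_poly_dvd_iff by (auto simp: coeff_pCons split: nat.splits)

definition L_op :: "'a::idom poly \<Rightarrow> 'a poly" where
  "L_op p = p - [:1, -1:] * pderiv p"

lemma L_op_add: "L_op (p + q) = L_op p + L_op q"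
  by (simp add: L_op_def pderiv_add algebra_simps)

lemma L_op_diff: "L_op (p - q) = L_op p - L_op q"
  by (simp add: L_op_def pderiv_diff algebra_simps)

lemma L_op_smult: "L_op (smult c p) = smult c (L_op p)"
  by (simp add: L_op_def pderiv_smult smult_diff_right del: mult_pCons_left)

lemma L_op_mult: "L_op (h * g) = h * L_op g - [:1, -1:] * pderiv h * g"
  by (simp add: L_op_def pderiv_mult algebra_simps)

lemma three_dvd_pderiv_cube: "[:3::int:] dvd pderiv (a ^ 3)"
proof -
  have "pderiv (a ^ 3) = smult 3 (a ^ 2 * pderiv a)"
    by (simp add: pderiv_power)
  also have "\<dots> = [:3:] * (a ^ 2 * pderiv a)"
    by simp
  finally show ?thesis by (rule dvdI)
qed

lemma L_op_congruence_step:
  fixes f :: "nat \<Rightarrow> int poly"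
  assumes rec: "\<And>k. f (k+3) = a * (f (k+2) - f (k+1)) + f k"
    and h0: "[:3:] dvd L_op (f m) + r"
    and h3: "[:3:] dvd L_op (f (m+3)) + r"
    and h6: "[:3:] dvd L_op (f (m+6)) + r"
  shows "[:3:] dvd L_op (f (m+9)) + r"
proof -
  obtain R where R: "f (m+9) = a^3 * (f (m+6) - f (m+3)) + f m + 3 * R"
    using recurrence_step9[of f a m, OF rec] by blast
  have three: "(3 :: int poly) = [:3:]" by (simp add: numeral_poly)
  have "L_op (f (m+9)) + r
      = a^3 * ((L_op (f (m+6)) + r) - (L_op (f (m+3)) + r))
        - [:1, -1:] * pderiv (a^3) * (f (m+6) - f (m+3))
        + (L_op (f m) + r) + smult 3 (L_op R)"
    unfolding R L_op_add L_op_mult L_op_diff three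
    by (simp add: L_op_smult[symmetric] algebra_simps)
  also have "[:3:] dvd \<dots>"
  proof -
    have "[:3:] dvd a^3 * ((L_op (f (m+6)) + r) - (L_op (f (m+3)) + r))"
      using h3 h6 by (intro dvd_mult dvd_diff)
    moreover have "[:3:] dvd [:1, -1:] * pderiv (a^3) * (f (m+6) - f (m+3))"
      using three_dvd_pderiv_cube[of a] by (intro dvd_mult2 dvd_mult)
    moreover have "smult 3 (L_op R) = [:3:] * L_op R"
      by simp
    ultimately show ?thesis
      using h0 by (metis dvd_add dvd_diff dvd_triv_left)
  qed
  finally show ?thesis .
qed

lemma progression3_induct:
  fixes P :: "nat \<Rightarrow> bool" and r j :: nat
  assumes step: "\<And>m. P m \<Longrightarrow> P (m+3) \<Longrightarrow> P (m+6) \<Longrightarrow> P (m+9)"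
    and "P r" "P (r+3)" "P (r+6)"
  shows "P (r + 3*j)"
proof (induction j rule: less_induct)
  case (less j)
  show ?case
  proof (cases "j < 3")
    case True
    then have "j = 0 \<or> j = 1 \<or> j = 2" by auto
    then show ?thesis using assms(2-4) by auto
  next
    case False
    then obtain i where j: "j = i + 3" by (metis add.commute le_Suc_ex not_less)
    have "P (r + 3*i)" "P ((r + 3*i) + 3)" "P ((r + 3*i) + 6)"
      using less.IH[of i] less.IH[of "i+1"] less.IH[of "i+2"] j
      by (simp_all add: algebra_simps)
    then have "P ((r + 3*i) + 9)"
      by (rule step)
    then show ?thesis using j by (simp add: algebra_simps)
  qed
qed

lemma Q_recurrence: "Q (k+3) = [:-1, 0, 1:] * (Q (k+2) - Q (k+1)) + Q k"
  by (simp add: eval_nat_numeral)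

lemma Q_base_cases:
  "[:3:] dvd L_op (Q 1) + [:0, 1:]"
  "[:3:] dvd L_op (Q 4) + [:0, 1:]"
  "[:3:] dvd L_op (Q 7) + [:0, 1:]"
  by (simp_all add: L_op_def pderiv_pCons eval_nat_numeral const_poly_dvd_pCons)

lemma L_op_Q_congruence: "[:3:] dvd L_op (Q (1 + 3*j)) + [:0, 1:]"
  using Q_base_cases
  by (intro progression3_induct[where P = "\<lambda>k. [:3:] dvd L_op (Q k) + [:0, 1:]"]
            L_op_congruence_step[OF Q_recurrence]) simp_all

lemma qpoly_index:
  fixes n :: int
  assumes "n \<le> -1" and "odd n" and "3 dvd n"
  shows "\<exists>j. nat ((- n - 1) div 2) = 1 + 3*j"
proof -
  obtain t where t: "n = 2*t + 1"
    using assms(2) by (rule oddE)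
  define x where "x = (-t - 1) div 3"
  have x: "(- n - 1) div 2 = 1 + 3*x" "x \<ge> 0"
    using assms(1,3) t unfolding x_def by presburger+
  then have "nat ((- n - 1) div 2) = 1 + 3 * nat x"
    by (simp add: nat_add_distrib nat_mult_distrib)
  then show ?thesis by blast
qed

theorem lemma5p3:
  fixes n :: int
  assumes "n \<le> -1" and "odd n" and "3 dvd n"
  shows "\<forall>i. [coeff (qpoly n - [:1, -1:] * pderiv (qpoly n)) i = coeff (- [:0, 1:]) i] (mod 3)"
proof
  fix i
  obtain j where "nat ((- n - 1) div 2) = 1 + 3*j"
    using qpoly_index[OF assms] by blast
  then have "[:3:] dvd L_op (qpoly n) + [:0, 1:]"
    using L_op_Q_congruence[of j] by (simp add: qpoly_def)
  then have "3 dvd coeff (L_op (qpoly n)) i - coeff (- [:0, 1:]) i"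
    unfolding const_poly_dvd_iff by (metis coeff_add coeff_minus diff_minus_eq_add)
  then show "[coeff (qpoly n - [:1, -1:] * pderiv (qpoly n)) i = coeff (- [:0, 1:]) i] (mod 3)"
    unfolding L_op_def cong_iff_dvd_diff .
qed

end
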